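(* Let $g\ge2$, $q=2g+1$, $\zeta=\exp(2\pi\sqrt{-1}/q)$. For $i=1,\dots,g$ let $\omega_i=\eta_i/B(i/q,i/q)$ where $\eta_i=dx/y^{q-i}$ on $C_{q,1}$, and let $\Omega_A=(\int_{A_j}\omega_i)_{i,j}$, $\Omega_B=(\int_{B_j}\omega_i)_{i,j}$ ($1\le i,j\le g$). Then $$\Omega_A=-\operatorname{diag}(-1+\zeta^i)\,\operatorname{diag}(\zeta^i)\,\big(\zeta^{2i(j-1)}\big)_{i,j},\qquad \Omega_B=\operatorname{diag}(-1+\zeta^i)\Big(\sum_{k=0}^{j-1}\zeta^{2ik}\Big)_{i,j}.$$
   Context: $C_{q,1}$ is the compact Riemann surface of $y^q=x(1-x)$ (genus $g$); $\{\eta_i\}$ is a basis of holomorphic 1-forms; $B(u,v)=\int_0^1t^{u-1}(1-t)^{v-1}dt$. $\sigma(x,y)=(x,\zeta y)$, $I_0(t)=(t,\sqrt[q]{t(1-t)})$, $c_j$ the class of $I_0\cdot(\sigma^j\circ I_0)^{-1}$. In coordinates $z=4^{1/q}y$, $w=-\sqrt{-1}(2x-1)$ (so $w^2=z^q-1$), $\gamma_k(t)=(\zeta^k 2t,\sqrt{-1}\sqrt{1-(2t)^q})$ for $0\le t\le 1/2$ and $(\zeta^k(2-2t),-\sqrt{-1}\sqrt{1-(2-2t)^q})$ for $1/2\le t\le1$; $A_i=\gamma_{2i-1}\cdot\gamma_{2i}^{-1}$, $B_i=\gamma_{2i-1}\cdot\gamma_{2i-2}^{-1}\cdots\gamma_1\cdot\gamma_0^{-1}$,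 forming a symplectic basis of $H_1(C_{q,1};\mathbb Z)$. $\operatorname{diag}(d_i)$ is the diagonal matrix with $(i,i)$-entry $d_i$. *)

theory Defs
  imports "HOL-Analysis.Analysis"
begin

text \<open>Points of the affine curve y^q = x(1-x) are represented as pairs (x,y) of complex numbers.\<close>

definition zeta :: "nat \<Rightarrow> complex" where
  "zeta q = exp (2 * of_real pi * \<i> / of_nat q)"

text \<open>The path gamma_k in the coordinates (z,w) with w^2 = z^q - 1.\<close>
definition gamma_zw :: "nat \<Rightarrow> nat \<Rightarrow> real \<Rightarrow> complex \<times> complex" where
  "gamma_zw q k t =
     (if t \<le> 1/2
      then (zeta q ^ k * of_real (2 * t), \<i> * of_real (sqrt (1 - (2 * t) ^ q)))
      else (zeta q ^ k * of_real (2 - 2 * t), - \<i> * of_real (sqrt (1 - (2 - 2 * t) ^ q))))"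

text \<open>Change of coordinates: z = 4^(1/q) y, w = -i(2x-1), i.e. x = (1 + i w)/2, y = z / 4^(1/q).\<close>
definition zw_to_xy :: "nat \<Rightarrow> complex \<times> complex \<Rightarrow> complex \<times> complex" where
  "zw_to_xy q p = ((1 + \<i> * snd p) / 2, fst p / of_real (root q 4))"

definition gamma_path :: "nat \<Rightarrow> nat \<Rightarrow> real \<Rightarrow> complex \<times> complex" where
  "gamma_path q k = zw_to_xy q \<circ> gamma_zw q k"

definition loop_path :: "nat \<Rightarrow> nat \<Rightarrow> nat \<Rightarrow> real \<Rightarrow> complex \<times> complex" where
  "loop_path q a b = gamma_path q a +++ reversepath (gamma_path q b)"

definition A_path :: "nat \<Rightarrow> nat \<Rightarrow> real \<Rightarrow> complex \<times> complex" where
  "A_path q i = loop_path q (2 * i - 1) (2 * i)"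

text \<open>B_i = gamma_{2i-1} . gamma_{2i-2}^{-1} ... gamma_1 . gamma_0^{-1} (defined for i >= 1).\<close>
fun B_path :: "nat \<Rightarrow> nat \<Rightarrow> real \<Rightarrow> complex \<times> complex" where
  "B_path q 0 = (\<lambda>t. (0, 0))"
| "B_path q (Suc 0) = loop_path q 1 0"
| "B_path q (Suc (Suc n)) = loop_path q (2 * n + 3) (2 * n + 2) +++ B_path q (Suc n)"

definition dx_integral :: "(complex \<times> complex \<Rightarrow> complex) \<Rightarrow> (real \<Rightarrow> complex \<times> complex) \<Rightarrow> complex" where
  "dx_integral f p = integral {0..1} (\<lambda>t. f (p t) * vector_derivative (\<lambda>s. fst (p s)) (at t))"

text \<open>omega_i = eta_i / B(i/q, i/q), eta_i = dx / y^(q-i); we record the coefficient of dx.\<close>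
definition omega :: "nat \<Rightarrow> nat \<Rightarrow> complex \<times> complex \<Rightarrow> complex" where
  "omega q i p = 1 / (snd p ^ (q - i) * of_real (Beta (real i / real q) (real i / real q)))"

end

theory Submission
  imports Defs
begin

(* Every A_j and B_j is a concatenation of loops gamma_a . gamma_b^{-1}, so the whole
   computation reduces to a single period: integrating omega_i along gamma_k gives
   zeta^(k i).  On each half of gamma_k the coordinate y equals zeta^k s / 4^(1/q) with
   s = |z| running through [0,1], and the pull-back of omega_i becomes
   zeta^(k i) * C * s^(i-1) / sqrt(1 - s^q) ds.  The substitution u = s^q turns this real
   integral into the Beta integral B(i/q,1/2)/q, and Legendre's duplication formula
   2^(2a) B(a,a) = 2 B(a,1/2) shows that C B(i/q,1/2)/q = 1. *)

(* Legendre's duplication formula, in Beta-function form: 2^(2a) B(a,a) = 2 B(a,1/2).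
   It is what makes the normalisation by B(i/q,i/q) produce periods free of Beta values. *)
lemma Beta_duplication:
  fixes a :: real
  assumes "a > 0"
  shows "2 powr (2*a) * Beta a a = 2 * Beta a (1/2)"
proof -
  have "a \<notin> \<int>\<^sub>\<le>\<^sub>0" "a + 1/2 \<notin> \<int>\<^sub>\<le>\<^sub>0"
    using assms by (auto dest: nonpos_Ints_nonpos)
  moreover have "complex_of_real a + 1/2 = complex_of_real (a + 1/2)"
    by simp
  ultimately have a: "complex_of_real a \<notin> \<int>\<^sub>\<le>\<^sub>0" "complex_of_real a + 1/2 \<notin> \<int>\<^sub>\<le>\<^sub>0"
    by (metis of_real_in_nonpos_Ints_iff)+
  have "complex_of_real (Gamma a * Gamma (a + 1/2))
          = complex_of_real (exp ((1 - 2*a) * ln 2) * sqrt pi * Gamma (2*a))"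
    using Gamma_legendre_duplication[OF a]
    by (simp only: of_real_mult of_real_exp of_real_diff of_real_1 of_real_numeral of_real_add
                   of_real_divide Gamma_complex_of_real[symmetric])
  hence "Gamma a * Gamma (a + 1/2) = exp ((1 - 2*a) * ln 2) * sqrt pi * Gamma (2*a)"
    using of_real_eq_iff by blast
  hence dup: "Gamma a * Gamma (a + 1/2) = 2 powr (1 - 2*a) * sqrt pi * Gamma (2*a)"
    by (simp add: powr_def)
  have pos: "Gamma (a + 1/2) > 0" "Gamma (2*a) > 0"
    using assms by auto
  have "2 powr (2*a) * Beta a a * (Gamma (a + 1/2) * Gamma (2*a))
          = 2 powr (2*a) * Gamma a * (Gamma a * Gamma (a + 1/2))"
    using pos unfolding Beta_def by (simp add: mult_2 field_simps)
  also have "\<dots> = (2 powr (2*a) * 2 powr (1 - 2*a)) * Gamma a * sqrt pi * Gamma (2*a)"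
    unfolding dup by (simp only: ac_simps)
  also have "\<dots> = 2 * Beta a (1/2) * (Gamma (a + 1/2) * Gamma (2*a))"
    using pos unfolding Beta_def Gamma_one_half_real by (simp add: field_simps flip: powr_add)
  finally show ?thesis
    using pos by simp
qed

lemma set_integrable_lborel_if_absolutely_integrable:
  fixes f :: "real \<Rightarrow> real"
  assumes "f absolutely_integrable_on {a..b}" "f \<in> borel_measurable borel"
  shows "set_integrable lborel {a..b} f"
proof -
  have "(\<lambda>x. indicator {a..b} x *\<^sub>R f x) \<in> borel_measurable lborel"
    using assms(2) by measurable
  from integrable_completion[OF this] show ?thesis
    using assms(1) unfolding set_integrable_def by simp
qed

lemma integral_power_substitution:
  fixes f :: "real \<Rightarrow> real"
  assumes "f absolutely_integrable_on {0..1}" "f \<in> borel_measurable borel" "0 < q"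
  shows "((\<lambda>x. f (x ^ q) * (real q * x ^ (q - 1))) has_integral integral {0..1} f) {0..1}"
proof -
  have f_int: "set_integrable lborel {0..1} f"
    using assms(1,2) by (rule set_integrable_lborel_if_absolutely_integrable)
  have ends: "(\<lambda>s::real. s ^ q) 0 = 0" "(\<lambda>s::real. s ^ q) 1 = 1"
    using assms by simp_all
  have der: "\<And>x. x \<in> {0..1} \<Longrightarrow> ((\<lambda>s::real. s ^ q) has_real_derivative (real q * x ^ (q - 1))) (at x)"
    by (auto intro!: derivative_eq_intros)
  have cont: "continuous_on {0..1} (\<lambda>x::real. real q * x ^ (q - 1))"
    by (intro continuous_intros)
  note subst = integral_substitution[of "\<lambda>s. s ^ q" 0 1 f, unfolded ends, OF f_int der cont _ zero_le_one]
  define g where "g = (\<lambda>x. f (x ^ q) * (real q * x ^ (q - 1)))"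
  have g_int: "set_integrable lborel {0..1} g"
    using subst(1) by (simp add: g_def)
  have "integral {0..1} g = (LINT x:{0..1}|lborel. g x)"
    using set_borel_integral_eq_integral(2)[OF g_int] by simp
  also have "\<dots> = (LINT x:{0..1}|lborel. f x)"
    using subst(2) unfolding set_lebesgue_integral_def g_def by (simp add: mult.commute)
  also have "\<dots> = integral {0..1} f"
    using set_borel_integral_eq_integral(2)[OF f_int] .
  finally show ?thesis
    using set_borel_integral_eq_integral(1)[OF g_int] unfolding g_def by (metis has_integral_integral)
qed

lemma Beta_integrand_power_substitution:
  fixes p q :: nat and s :: real
  assumes "1 \<le> p" "0 < q" "0 < s" "s < 1"
  shows "(s ^ q) powr (p / q - 1) * (1 - s ^ q) powr (1/2 - 1) / q * (real q * s ^ (q - 1))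
           = s ^ (p - 1) / sqrt (1 - s ^ q)"
proof -
  define a where "a = real p / real q"
  have "(s ^ q) powr (a - 1) * s ^ (q - 1) = s powr (real q * (a - 1) + real (q - 1))"
    using assms(3) by (simp add: powr_powr [symmetric] powr_realpow powr_add)
  also have "real q * (a - 1) + real (q - 1) = real (p - 1)"
    using assms by (simp add: a_def field_simps of_nat_diff)
  finally have "(s ^ q) powr (a - 1) * s ^ (q - 1) = s ^ (p - 1)"
    using assms(3) by (simp only: powr_realpow)
  moreover have "s ^ q < 1"
    using assms by (simp add: power_less_one_iff)
  hence "(1 - s ^ q) powr (1/2 - 1) = 1 / sqrt (1 - s ^ q)"
    by (simp add: powr_minus_divide powr_half_sqrt [symmetric])
  ultimately show ?thesis
    using assms by (simp add: a_def field_simps)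
qed

lemma Beta_integral_power_substitution:
  fixes p q :: nat
  assumes "1 \<le> p" "0 < q"
  shows "((\<lambda>s::real. s ^ (p - 1) / sqrt (1 - s ^ q)) has_integral Beta (p / q) (1/2) / q) {0..1}"
proof -
  define f where "f = (\<lambda>v::real. v powr (p / q - 1) * (1 - v) powr (1/2 - 1) / q)"
  have "(f has_integral Beta (p / q) (1/2) / q) {0..1}"
    unfolding f_def using assms has_integral_Beta_real[of "p / q" "1/2"]
    by (intro has_integral_divide) simp_all
  moreover from this have "f absolutely_integrable_on {0..1}"
    by (intro nonnegative_absolutely_integrable_1) (auto simp: f_def integrable_on_def)
  moreover have "f \<in> borel_measurable borel"
    unfolding f_def by measurable
  ultimately have "((\<lambda>x. f (x ^ q) * (real q * x ^ (q - 1))) has_integral Beta (p / q) (1/2) / q) {0..1}"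
    using integral_power_substitution[of f q] assms(2) by (simp add: integral_unique)
  thus ?thesis
  proof (rule has_integral_spike_finite[of "{0, 1}", rotated 2])
    fix s :: real
    assume "s \<in> {0..1} - {0, 1}"
    thus "s ^ (p - 1) / sqrt (1 - s ^ q) = f (s ^ q) * (real q * s ^ (q - 1))"
      unfolding f_def using assms by (intro Beta_integrand_power_substitution[symmetric]) auto
  qed simp
qed

definition has_dx_integral ::
  "(complex \<times> complex \<Rightarrow> complex) \<Rightarrow> (real \<Rightarrow> complex \<times> complex) \<Rightarrow> complex \<Rightarrow> bool" where
  "has_dx_integral f p I \<longleftrightarrow>
     (\<exists>S. finite S \<and> (\<forall>t\<in>{0<..<1} - S. (\<lambda>s. fst (p s)) differentiable (at t)))
     \<and> ((\<lambda>t. f (p t) * vector_derivative (\<lambda>s. fst (p s)) (at t)) has_integral I) {0..1}"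

lemma dx_integral_eqI: "has_dx_integral f p I \<Longrightarrow> dx_integral f p = I"
  unfolding has_dx_integral_def dx_integral_def using integral_unique by blast

lemma has_integral_affine_rescale:
  fixes h :: "real \<Rightarrow> complex"
  assumes "(h has_integral I) {0..1}" "m \<noteq> 0"
  shows "((\<lambda>x. of_real m * h (m * x + c)) has_integral of_real (sgn m) * I)
           ((\<lambda>x. x / m - c / m) ` {0..1})"
proof -
  have "((\<lambda>x. h (m * x + c)) has_integral (1 / \<bar>m\<bar>) *\<^sub>R I) ((\<lambda>x. x / m - c / m) ` {0..1})"
    using has_integral_affinity[of h I 0 1 m c] assms by (simp add: field_simps)
  moreover have "of_real m * ((1 / \<bar>m\<bar>) *\<^sub>R I) = of_real (sgn m) * I"
    using assms by (cases "m > 0") (simp_all add: scaleR_conv_of_real)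
  ultimately show ?thesis
    using has_integral_mult_right[of _ _ _ "of_real m"] by metis
qed

lemma affine_reparam_has_vector_derivative:
  fixes \<phi> \<psi> :: "real \<Rightarrow> 'a::real_normed_vector"
  assumes "\<phi> differentiable (at (m * t + c))" "open V" "t \<in> V"
    and "\<And>s. s \<in> V \<Longrightarrow> \<psi> s = \<phi> (m * s + c)"
  shows "(\<psi> has_vector_derivative m *\<^sub>R vector_derivative \<phi> (at (m * t + c))) (at t)"
proof -
  have "((\<lambda>s. m * s + c) has_vector_derivative m) (at t)"
    by (auto intro!: derivative_eq_intros)
  moreover have "(\<phi> has_vector_derivative vector_derivative \<phi> (at (m * t + c))) (at (m * t + c))"
    using assms(1) vector_derivative_works by blast
  ultimately have "((\<lambda>s. \<phi> (m * s + c)) has_vector_derivative m *\<^sub>R vector_derivative \<phi> (at (m * t + c))) (at t)"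
    using vector_diff_chain_at[of "\<lambda>s. m * s + c" m t \<phi>] by (simp add: o_def)
  thus ?thesis
    by (rule has_vector_derivative_transform_within_open[OF _ assms(2,3)]) (simp add: assms(4))
qed

(* Reversal and both halves of a concatenation are instances. *)
lemma has_dx_integral_affine_reparam:
  assumes p: "has_dx_integral f p I" and m: "m \<noteq> 0"
    and r: "\<And>s. m * s + c \<in> {0<..<1} \<Longrightarrow> r s = p (m * s + c)"
  shows "\<exists>S. finite S \<and> (\<forall>t. m * t + c \<in> {0<..<1} \<longrightarrow> t \<notin> S \<longrightarrow>
               (\<lambda>s. fst (r s)) differentiable (at t))"
    and "((\<lambda>t. f (r t) * vector_derivative (\<lambda>s. fst (r s)) (at t)) has_integral of_real (sgn m) * I)
           ((\<lambda>x. x / m - c / m) ` {0..1})"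
proof -
  obtain Sp where Sp: "finite Sp" "\<And>u. u \<in> {0<..<1} - Sp \<Longrightarrow> (\<lambda>s. fst (p s)) differentiable (at u)"
    and hp: "((\<lambda>t. f (p t) * vector_derivative (\<lambda>s. fst (p s)) (at t)) has_integral I) {0..1}"
    using p unfolding has_dx_integral_def by blast
  define v where "v = (\<lambda>u. vector_derivative (\<lambda>s. fst (p s)) (at u))"
  define S where "S = (\<lambda>u. (u - c) / m) ` Sp"
  define V where "V = (\<lambda>s. m * s + c) -` {0<..<1}"
  have "open V"
    unfolding V_def by (intro continuous_open_vimage continuous_intros)
  have der: "((\<lambda>s. fst (r s)) has_vector_derivative of_real m * v (m * t + c)) (at t)"
    if "t \<in> V" "t \<notin> S" for t
  proof -
    have "t = ((m * t + c) - c) / m"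
      using m by simp
    hence "m * t + c \<notin> Sp"
      using that(2) unfolding S_def by (metis image_eqI)
    hence "(\<lambda>s. fst (p s)) differentiable (at (m * t + c))"
      using Sp(2) that(1) unfolding V_def by simp
    from affine_reparam_has_vector_derivative[OF this \<open>open V\<close> that(1)] show ?thesis
      using r unfolding V_def v_def scaleR_conv_of_real by simp
  qed
  show "\<exists>S. finite S \<and> (\<forall>t. m * t + c \<in> {0<..<1} \<longrightarrow> t \<notin> S \<longrightarrow>
           (\<lambda>s. fst (r s)) differentiable (at t))"
    using der Sp(1) unfolding S_def V_def differentiable_def has_vector_derivative_def by blast
  show "((\<lambda>t. f (r t) * vector_derivative (\<lambda>s. fst (r s)) (at t)) has_integral of_real (sgn m) * I)
          ((\<lambda>x. x / m - c / m) ` {0..1})"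
  proof (rule has_integral_spike_finite[OF _ _ has_integral_affine_rescale[OF hp m]])
    show "finite (S \<union> (\<lambda>x. x / m - c / m) ` {0, 1})"
      using Sp(1) by (simp add: S_def)
    fix t
    assume t: "t \<in> (\<lambda>x. x / m - c / m) ` {0..1} - (S \<union> (\<lambda>x. x / m - c / m) ` {0, 1})"
    then obtain x where x: "x \<in> {0<..<1}" "t = x / m - c / m"
      by auto
    hence "m * t + c = x"
      using m by (simp add: field_simps)
    hence "t \<in> V" "t \<notin> S"
      using x t by (auto simp: V_def)
    thus "f (r t) * vector_derivative (\<lambda>s. fst (r s)) (at t) =
          of_real m * (f (p (m * t + c)) * vector_derivative (\<lambda>s. fst (p s)) (at (m * t + c)))"
      using vector_derivative_at[OF der] r by (simp add: V_def v_def)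
  qed
qed

lemma has_dx_integral_reversepath:
  assumes "has_dx_integral f p I"
  shows "has_dx_integral f (reversepath p) (- I)"
proof -
  have r: "reversepath p s = p (-1 * s + 1)" for s
    by (simp add: reversepath_def)
  note reparam = has_dx_integral_affine_reparam[OF assms _ r, simplified]
  have "(\<lambda>x::real. x / -1 - 1 / -1) ` {0..1} = {0..1}"
    using image_affinity_atLeastAtMost[of "-1" 1 0 1] by (simp add: algebra_simps)
  with reparam show ?thesis
    unfolding has_dx_integral_def by (auto simp: algebra_simps)
qed

lemma has_dx_integral_joinpaths:
  assumes p1: "has_dx_integral f p1 I1" and p2: "has_dx_integral f p2 I2"
  shows "has_dx_integral f (p1 +++ p2) (I1 + I2)"
proof -
  have left: "(p1 +++ p2) s = p1 (2 * s + 0)" if "2 * s + 0 \<in> {0<..<1}" for s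
    using that by (simp add: joinpaths_def)
  have right: "(p1 +++ p2) s = p2 (2 * s + -1)" if "2 * s + -1 \<in> {0<..<1}" for s
    using that by (simp add: joinpaths_def)
  note L = has_dx_integral_affine_reparam[OF p1 _ left, simplified]
  note R = has_dx_integral_affine_reparam[OF p2 _ right, simplified]
  obtain S1 S2 where S: "finite S1" "finite S2"
    and d1: "\<And>t. 0 < t \<Longrightarrow> t < 1/2 \<Longrightarrow> t \<notin> S1 \<Longrightarrow> (\<lambda>s. fst ((p1 +++ p2) s)) differentiable (at t)"
    and d2: "\<And>t. 1/2 < t \<Longrightarrow> t < 1 \<Longrightarrow> t \<notin> S2 \<Longrightarrow> (\<lambda>s. fst ((p1 +++ p2) s)) differentiable (at t)"
    using L(1) R(1) by (auto simp: field_simps)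
  have "(\<lambda>x::real. x / 2 - 0 / 2) ` {0..1} = {0..1/2}" "(\<lambda>x::real. x / 2 - -1 / 2) ` {0..1} = {1/2..1}"
    using image_affinity_atLeastAtMost[of "1/2" 0 0 1] image_affinity_atLeastAtMost[of "1/2" "1/2" 0 1]
    by (simp_all add: algebra_simps)
  with L(2) R(2) show ?thesis
    unfolding has_dx_integral_def
  proof (intro conjI exI[of _ "S1 \<union> S2 \<union> {1/2}"])
    show "\<forall>t\<in>{0<..<1} - (S1 \<union> S2 \<union> {1/2}). (\<lambda>s. fst ((p1 +++ p2) s)) differentiable (at t)"
      using d1 d2 by (metis DiffE Un_iff greaterThanLessThan_iff insertI1 linorder_neqE_linordered_idom)
  qed (use S in \<open>auto intro: has_integral_combine[of 0 "1/2" 1]\<close>)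
qed

lemma zeta_power_eq_1: "0 < q \<Longrightarrow> zeta q ^ q = 1"
proof -
  assume "0 < q"
  hence "of_nat q * (2 * of_real pi * \<i> / of_nat q) = 2 * of_real pi * \<i>"
    by simp
  thus ?thesis
    unfolding zeta_def exp_of_nat_mult[symmetric] by simp
qed

lemma gamma_path_first_half:
  "t \<le> 1/2 \<Longrightarrow> gamma_path q k t =
     (of_real ((1 - sqrt (1 - (2 * t) ^ q)) / 2), zeta q ^ k * of_real (2 * t) / of_real (root q 4))"
  by (simp add: gamma_path_def zw_to_xy_def gamma_zw_def)

lemma gamma_path_second_half:
  "1/2 < t \<Longrightarrow> gamma_path q k t =
     (of_real ((1 + sqrt (1 - (2 - 2 * t) ^ q)) / 2), zeta q ^ k * of_real (2 - 2 * t) / of_real (root q 4))"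
  by (simp add: gamma_path_def zw_to_xy_def gamma_zw_def)

(* dx/dt along gamma_k, expressed through s = |z| (the factor 2 = |ds/dt| included). *)
definition x_speed :: "nat \<Rightarrow> real \<Rightarrow> real" where
  "x_speed q s = real q * s ^ (q - 1) / (2 * sqrt (1 - s ^ q))"

lemma sqrt_one_minus_power_derivative:
  fixes u :: "real \<Rightarrow> real"
  assumes "(u has_real_derivative u') (at t)" "0 \<le> u t" "u t < 1" "0 < q"
  shows "((\<lambda>s. sqrt (1 - u s ^ q)) has_real_derivative
           - (real q * u t ^ (q - 1) * u') / (2 * sqrt (1 - u t ^ q))) (at t)"
proof -
  have "u t ^ q < 1"
    using assms(2-4) by (simp add: power_less_one_iff)
  hence "((\<lambda>s. sqrt (1 - u s ^ q)) has_real_derivative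
           inverse (sqrt (1 - u t ^ q)) / 2 * (- (real q * u t ^ (q - 1) * u'))) (at t)"
    using assms(1) by (auto intro!: DERIV_chain2[OF DERIV_real_sqrt] derivative_eq_intros)
  thus ?thesis
    by (simp add: field_simps)
qed

lemma gamma_path_x_derivative_first_half:
  assumes "0 < t" "t < 1/2" "0 < q"
  shows "((\<lambda>s. fst (gamma_path q k s)) has_vector_derivative of_real (x_speed q (2 * t))) (at t)"
proof -
  have "((\<lambda>s. sqrt (1 - (2 * s) ^ q)) has_real_derivative
          - (real q * (2 * t) ^ (q - 1) * 2) / (2 * sqrt (1 - (2 * t) ^ q))) (at t)"
    using assms by (intro sqrt_one_minus_power_derivative) (auto intro!: derivative_eq_intros)
  hence "((\<lambda>s. (1 - sqrt (1 - (2 * s) ^ q)) / 2) has_real_derivative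
          (0 - - (real q * (2 * t) ^ (q - 1) * 2) / (2 * sqrt (1 - (2 * t) ^ q))) / 2) (at t)"
    by (intro DERIV_cdivide DERIV_diff DERIV_const)
  hence "((\<lambda>s. (1 - sqrt (1 - (2 * s) ^ q)) / 2) has_real_derivative x_speed q (2 * t)) (at t)"
    by (simp add: x_speed_def mult.commute)
  from has_vector_derivative_of_real[OF this] show ?thesis
    by (rule has_vector_derivative_transform_within_open[of _ _ _ "{..<1/2}"])
       (use assms in \<open>auto simp: gamma_path_first_half\<close>)
qed

lemma gamma_path_x_derivative_second_half:
  assumes "1/2 < t" "t < 1" "0 < q"
  shows "((\<lambda>s. fst (gamma_path q k s)) has_vector_derivative of_real (x_speed q (2 - 2 * t))) (at t)"
proof -
  have "((\<lambda>s. sqrt (1 - (2 - 2 * s) ^ q)) has_real_derivative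
          - (real q * (2 - 2 * t) ^ (q - 1) * (-2)) / (2 * sqrt (1 - (2 - 2 * t) ^ q))) (at t)"
    using assms by (intro sqrt_one_minus_power_derivative) (auto intro!: derivative_eq_intros)
  hence "((\<lambda>s. (1 + sqrt (1 - (2 - 2 * s) ^ q)) / 2) has_real_derivative
          (0 + - (real q * (2 - 2 * t) ^ (q - 1) * (-2)) / (2 * sqrt (1 - (2 - 2 * t) ^ q))) / 2) (at t)"
    by (intro DERIV_cdivide DERIV_add DERIV_const)
  hence "((\<lambda>s. (1 + sqrt (1 - (2 - 2 * s) ^ q)) / 2) has_real_derivative x_speed q (2 - 2 * t)) (at t)"
    by (simp add: x_speed_def mult.commute)
  from has_vector_derivative_of_real[OF this] show ?thesis
    by (rule has_vector_derivative_transform_within_open[of _ _ _ "{1/2<..}"])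
       (use assms in \<open>auto simp: gamma_path_second_half\<close>)
qed

lemma omega_times_x_speed:
  fixes s :: real
  assumes "0 < s" "s < 1" "1 \<le> i" "i < q"
  defines "C \<equiv> root q 4 ^ (q - i) * real q / (2 * Beta (i / q) (i / q))"
  shows "omega q i (x, zeta q ^ k * of_real s / of_real (root q 4)) * of_real (x_speed q s)
           = zeta q ^ (k * i) * of_real C * of_real (s ^ (i - 1) / sqrt (1 - s ^ q))"
proof -
  define Z where "Z = zeta q"
  define c where "c = root q 4"
  define Bt where "Bt = Beta (i / q) (i / q)"
  have "c > 0" "Bt > 0"
    using assms by (auto simp: c_def Bt_def Beta_def intro!: divide_pos_pos mult_pos_pos)
  obtain d where d: "q = i + d"
    using assms(4) less_imp_add_positive by blast
  have "Z ^ (k * i) * Z ^ (k * (q - i)) = (Z ^ q) ^ k"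
    unfolding d by (simp add: algebra_simps flip: power_add power_mult)
  hence "Z ^ (k * i) * Z ^ (k * (q - i)) = 1"
    using zeta_power_eq_1[of q] assms unfolding Z_def by simp
  hence Z_inv: "inverse (Z ^ (k * (q - i))) = Z ^ (k * i)"
    by (intro inverse_unique) (simp only: mult.commute)
  have y_power: "(Z ^ k * of_real s / of_real c) ^ (q - i) = Z ^ (k * (q - i)) * of_real ((s / c) ^ (q - i))"
    by (simp add: power_mult_distrib power_divide power_mult)
  have "s ^ (q - 1) = s ^ (q - i) * s ^ (i - 1)"
    using assms by (simp flip: power_add)
  hence real_part: "x_speed q s / ((s / c) ^ (q - i) * Bt) = C * (s ^ (i - 1) / sqrt (1 - s ^ q))"
    unfolding x_speed_def C_def c_def[symmetric] Bt_def[symmetric]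
    using assms \<open>c > 0\<close> \<open>Bt > 0\<close> by (simp add: field_simps power_divide)
  have "omega q i (x, Z ^ k * of_real s / of_real c) * of_real (x_speed q s)
          = inverse (Z ^ (k * (q - i))) * of_real (x_speed q s / ((s / c) ^ (q - i) * Bt))"
    unfolding omega_def y_power Bt_def by (simp add: field_simps power_mult)
  also have "\<dots> = Z ^ (k * i) * of_real C * of_real (s ^ (i - 1) / sqrt (1 - s ^ q))"
    unfolding Z_inv real_part by (simp add: mult.assoc)
  finally show ?thesis
    unfolding Z_def c_def .
qed

(* The constant C of omega_times_x_speed is exactly cancelled by the Beta integral
   B(i/q,1/2)/q; this is the duplication formula combined with (4^(1/q))^q = 4. *)
lemma omega_normalisation:
  assumes "1 \<le> i" "i < q"
  shows "root q 4 ^ (q - i) * real q / (2 * Beta (i / q) (i / q)) * (Beta (i / q) (1/2) / q) = 1"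
proof -
  define a where "a = real i / real q"
  define c where "c = root q 4"
  have "a > 0" "Beta a a > 0"
    using assms by (auto simp: a_def Beta_def intro!: divide_pos_pos mult_pos_pos)
  have c_power: "c ^ (q - i) * c ^ i = 4"
    using assms by (simp add: c_def flip: power_add)
  have "c ^ i = 2 powr (2 * a)"
  proof -
    have "c ^ i = 4 powr (1 / q * i)"
      using assms by (simp add: c_def root_powr_inverse powr_realpow[symmetric] powr_powr)
    also have "\<dots> = (2 powr 2) powr a"
      by (simp add: a_def)
    finally show ?thesis
      by (simp only: powr_powr)
  qed
  hence "c ^ (q - i) * Beta a (1/2) * 2 = c ^ (q - i) * (c ^ i * Beta a a)"
    using Beta_duplication[OF \<open>a > 0\<close>] by simp
  also have "\<dots> = 4 * Beta a a"
    using c_power by (simp add: mult.assoc[symmetric])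
  finally have "c ^ (q - i) * Beta a (1/2) = 2 * Beta a a"
    by simp
  thus ?thesis
    using assms \<open>Beta a a > 0\<close> by (simp add: a_def[symmetric] c_def[symmetric] field_simps)
qed

lemma gamma_path_x_differentiable:
  assumes "0 < q" "t \<in> {0<..<1} - {1/2}"
  shows "(\<lambda>s. fst (gamma_path q k s)) differentiable (at t)"
  using assms gamma_path_x_derivative_first_half[of t q k] gamma_path_x_derivative_second_half[of t q k]
  unfolding differentiable_def has_vector_derivative_def by (cases "t < 1/2") auto

lemma omega_dx_along_gamma_path:
  assumes "1 \<le> i" "i < q"
  defines "C \<equiv> root q 4 ^ (q - i) * real q / (2 * Beta (i / q) (i / q))"
    and "H \<equiv> \<lambda>s::real. complex_of_real (s ^ (i - 1) / sqrt (1 - s ^ q))"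
  shows "0 < t \<Longrightarrow> t < 1/2 \<Longrightarrow>
           omega q i (gamma_path q k t) * vector_derivative (\<lambda>s. fst (gamma_path q k s)) (at t)
             = zeta q ^ (k * i) * of_real C * H (2 * t)"
    and "1/2 < t \<Longrightarrow> t < 1 \<Longrightarrow>
           omega q i (gamma_path q k t) * vector_derivative (\<lambda>s. fst (gamma_path q k s)) (at t)
             = zeta q ^ (k * i) * of_real C * H (2 - 2 * t)"
proof -
  have "0 < q"
    using assms by simp
  show "0 < t \<Longrightarrow> t < 1/2 \<Longrightarrow>
          omega q i (gamma_path q k t) * vector_derivative (\<lambda>s. fst (gamma_path q k s)) (at t)
            = zeta q ^ (k * i) * of_real C * H (2 * t)"
    using assms omega_times_x_speed[of "2 * t" i q _ k]
      vector_derivative_at[OF gamma_path_x_derivative_first_half[OF _ _ \<open>0 < q\<close>]]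
    by (simp add: gamma_path_first_half)
  show "1/2 < t \<Longrightarrow> t < 1 \<Longrightarrow>
          omega q i (gamma_path q k t) * vector_derivative (\<lambda>s. fst (gamma_path q k s)) (at t)
            = zeta q ^ (k * i) * of_real C * H (2 - 2 * t)"
    using assms omega_times_x_speed[of "2 - 2 * t" i q _ k]
      vector_derivative_at[OF gamma_path_x_derivative_second_half[OF _ _ \<open>0 < q\<close>]]
    by (simp add: gamma_path_second_half)
qed

(* The basic period: integrating omega_i along gamma_k gives zeta^(k i).  Each half
   contributes half of zeta^(k i) * C * B(i/q,1/2)/q. *)
lemma has_dx_integral_gamma_path:
  assumes "1 \<le> i" "i < q"
  shows "has_dx_integral (omega q i) (gamma_path q k) (zeta q ^ (k * i))"
proof -
  define C where "C = root q 4 ^ (q - i) * real q / (2 * Beta (i / q) (i / q))"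
  define J where "J = Beta (i / q) (1/2) / q"
  define H where "H = (\<lambda>s::real. complex_of_real (s ^ (i - 1) / sqrt (1 - s ^ q)))"
  define K where "K = zeta q ^ (k * i) * of_real C / 2"
  let ?F = "\<lambda>t. omega q i (gamma_path q k t) * vector_derivative (\<lambda>s. fst (gamma_path q k s)) (at t)"
  note integrand = omega_dx_along_gamma_path[OF assms, of _ k, folded C_def]
  have "0 < q"
    using assms by simp
  have "(H has_integral of_real J) {0..1}"
    unfolding H_def J_def
    by (rule has_integral_of_real[OF Beta_integral_power_substitution[OF assms(1) \<open>0 < q\<close>]])
  moreover have "(\<lambda>x::real. x / 2 - 0 / 2) ` {0..1} = {0..1/2}" "(\<lambda>x::real. x / -2 - 2 / -2) ` {0..1} = {1/2..1}"
    using image_affinity_atLeastAtMost[of "1/2" 0 0 1] image_affinity_atLeastAtMost[of "-1/2" 1 0 1]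
    by (simp_all add: algebra_simps)
  ultimately have I1: "((\<lambda>t. of_real 2 * H (2 * t + 0)) has_integral of_real J) {0..1/2}"
    and I2: "((\<lambda>t. of_real (-2) * H (-2 * t + 2)) has_integral - of_real J) {1/2..1}"
    using has_integral_affine_rescale[of H _ 2 0] has_integral_affine_rescale[of H _ "-2" 2]
    by simp_all
  have "(?F has_integral K * of_real J) {0..1/2}"
    by (rule has_integral_spike_finite[of "{0, 1/2}", OF _ _ has_integral_mult_right[OF I1]])
       (auto simp: integrand K_def H_def)
  moreover have "(?F has_integral - K * - of_real J) {1/2..1}"
    by (rule has_integral_spike_finite[of "{1/2, 1}", OF _ _ has_integral_mult_right[OF I2]])
       (auto simp: integrand K_def H_def)
  ultimately have "(?F has_integral 2 * (K * of_real J)) {0..1}"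
    using has_integral_combine[of 0 "1/2" 1 ?F "K * of_real J" "- K * - of_real J"] by simp
  moreover have "2 * (K * of_real J) = zeta q ^ (k * i) * of_real (C * J)"
    unfolding K_def by simp
  moreover have "C * J = 1"
    unfolding C_def J_def by (rule omega_normalisation[OF assms])
  ultimately show ?thesis
    unfolding has_dx_integral_def using gamma_path_x_differentiable[OF \<open>0 < q\<close>]
    by (intro conjI exI[of _ "{1/2}"]) simp_all
qed

lemma has_dx_integral_loop_path:
  assumes "1 \<le> i" "i < q"
  shows "has_dx_integral (omega q i) (loop_path q a b) (zeta q ^ (a * i) - zeta q ^ (b * i))"
  using has_dx_integral_joinpaths[OF has_dx_integral_gamma_path[OF assms]
      has_dx_integral_reversepath[OF has_dx_integral_gamma_path[OF assms]]]
  unfolding loop_path_def by simp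

lemma power_odd_minus_even:
  fixes Z :: "'a::comm_ring_1"
  shows "Z ^ ((2 * m + 1) * i) - Z ^ ((2 * m) * i) = (-1 + Z ^ i) * Z ^ (2 * i * m)"
  by (simp add: algebra_simps power_add power_mult)

lemma power_odd_minus_next_even:
  fixes Z :: "'a::comm_ring_1"
  shows "Z ^ ((2 * m + 1) * i) - Z ^ ((2 * m + 2) * i) = - ((-1 + Z ^ i) * Z ^ i * Z ^ (2 * i * m))"
proof -
  have "Z ^ ((2 * m + 1) * i) = Z ^ i * Z ^ (2 * i * m)" "Z ^ ((2 * m + 2) * i) = Z ^ i * Z ^ i * Z ^ (2 * i * m)"
    by (simp_all add: algebra_simps flip: power_add)
  thus ?thesis
    by (simp add: algebra_simps)
qed

lemma has_dx_integral_B_path: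
  assumes "1 \<le> i" "i < q"
  shows "has_dx_integral (omega q i) (B_path q (Suc n)) ((-1 + zeta q ^ i) * (\<Sum>k = 0..n. zeta q ^ (2 * i * k)))"
proof (induction n)
  case 0
  show ?case
    using has_dx_integral_loop_path[OF assms, of 1 0] by simp
next
  case (Suc n)
  have "B_path q (Suc (Suc n)) = loop_path q (2 * Suc n + 1) (2 * Suc n) +++ B_path q (Suc n)"
    by (simp add: numeral_3_eq_3)
  moreover have "has_dx_integral (omega q i) (loop_path q (2 * Suc n + 1) (2 * Suc n) +++ B_path q (Suc n))
          ((zeta q ^ ((2 * Suc n + 1) * i) - zeta q ^ ((2 * Suc n) * i))
           + (-1 + zeta q ^ i) * (\<Sum>k = 0..n. zeta q ^ (2 * i * k)))"
    by (rule has_dx_integral_joinpaths[OF has_dx_integral_loop_path[OF assms] Suc.IH])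
  moreover have "(zeta q ^ ((2 * Suc n + 1) * i) - zeta q ^ ((2 * Suc n) * i))
           + (-1 + zeta q ^ i) * (\<Sum>k = 0..n. zeta q ^ (2 * i * k))
        = (-1 + zeta q ^ i) * (\<Sum>k = 0..Suc n. zeta q ^ (2 * i * k))"
    unfolding power_odd_minus_even by (simp add: distrib_left add.commute)
  ultimately show ?case
    by metis
qed

theorem mainTheorem8:
  fixes g :: nat
  assumes "g \<ge> 2"
  defines "q \<equiv> 2 * g + 1"
  shows "\<forall>i\<in>{1..g}. \<forall>j\<in>{1..g}.
           dx_integral (omega q i) (A_path q j)
             = - ((-1 + zeta q ^ i) * zeta q ^ i * zeta q ^ (2 * i * (j - 1)))
         \<and> dx_integral (omega q i) (B_path q j)
             = (-1 + zeta q ^ i) * (\<Sum>k = 0..j - 1. zeta q ^ (2 * i * k))"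
proof (intro ballI conjI)
  fix i j
  assume "i \<in> {1..g}" "j \<in> {1..g}"
  then have i: "1 \<le> i" "i < q"
    unfolding q_def by auto
  obtain n where j: "j = Suc n"
    using \<open>j \<in> {1..g}\<close> by (cases j) auto
  have "A_path q j = loop_path q (2 * n + 1) (2 * n + 2)"
    unfolding A_path_def j by simp
  thus "dx_integral (omega q i) (A_path q j)
          = - ((-1 + zeta q ^ i) * zeta q ^ i * zeta q ^ (2 * i * (j - 1)))"
    using dx_integral_eqI[OF has_dx_integral_loop_path[OF i]] power_odd_minus_next_even
    by (simp add: j)
  show "dx_integral (omega q i) (B_path q j) = (-1 + zeta q ^ i) * (\<Sum>k = 0..j - 1. zeta q ^ (2 * i * k))"
    using dx_integral_eqI[OF has_dx_integral_B_path[OF i]] by (simp add: j)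
qed

end
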